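(* Let $T$ be a tree on $n\ge3$ vertices with distance matrix $M$, and let $C=M\left(\frac{2}{n}J_n-I_n\right)$. Then $C$ is positive definite in the sense that $\mathbf{x}^TC\mathbf{x}>0$ for every nonzero $\mathbf{x}\in\mathbb{R}^n$.
   Context: The distance matrix $M$ of $T$ is the $n\times n$ matrix whose $(i,j)$ entry is the number of edges on the path between vertices $i$ and $j$ of $T$. $J_n$ is the $n\times n$ all-ones matrix and $I_n$ the identity matrix. $C$ need not be symmetric. *)

theory Defs
  imports "HOL-Analysis.Analysis"
begin

definition is_walk :: "('a \<Rightarrow> 'a \<Rightarrow> bool) \<Rightarrow> 'a list \<Rightarrow> bool" where
  "is_walk E xs \<longleftrightarrow> xs \<noteq> [] \<and> (\<forall>i. Suc i < length xs \<longrightarrow> E (xs ! i) (xs ! Suc i))"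

definition is_cycle :: "('a \<Rightarrow> 'a \<Rightarrow> bool) \<Rightarrow> 'a list \<Rightarrow> bool" where
  "is_cycle E xs \<longleftrightarrow> is_walk E xs \<and> distinct xs \<and> length xs \<ge> 3 \<and> E (last xs) (hd xs)"

definition is_tree :: "('a::finite \<Rightarrow> 'a \<Rightarrow> bool) \<Rightarrow> bool" where
  "is_tree E \<longleftrightarrow> (\<forall>u v. E u v \<longrightarrow> E v u) \<and> (\<forall>u. \<not> E u u)
     \<and> (\<forall>u v. \<exists>xs. is_walk E xs \<and> hd xs = u \<and> last xs = v)
     \<and> (\<nexists>xs. is_cycle E xs)"

definition graph_dist :: "('a \<Rightarrow> 'a \<Rightarrow> bool) \<Rightarrow> 'a \<Rightarrow> 'a \<Rightarrow> nat" where
  "graph_dist E u v = (LEAST k. \<exists>xs. is_walk E xs \<and> hd xs = u \<and> last xs = v \<and> length xs = Suc k)"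

definition distance_matrix :: "('n::finite \<Rightarrow> 'n \<Rightarrow> bool) \<Rightarrow> real^'n^'n" where
  "distance_matrix E = (\<chi> i j. real (graph_dist E i j))"

definition all_ones :: "real^'n^'n" where
  "all_ones = (\<chi> i j. 1)"

end

theory Submission
  imports Defs
begin

text \<open>
  Let \<open>a\<close> be the mean of the entries of \<open>x\<close> and \<open>y = x - a \<one>\<close>, so that \<open>\<Sum> y = 0\<close>.
  Since \<open>(2/n) J x = 2 a \<one>\<close>, the form equals \<open>x\<^sup>T M (2 a \<one> - x) = a\<^sup>2 \<one>\<^sup>T M \<one> - y\<^sup>T M y\<close>.
  For a tree the Laplacian \<open>L\<close> satisfies \<open>L M = \<tau> \<one>\<^sup>T - 2 I\<close> with \<open>\<tau> = 2 - deg\<close>, so with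
  \<open>z = M y\<close> we get \<open>L z = -2 y\<close> and \<open>y\<^sup>T M y = -z\<^sup>T L z / 2 = -(\<Sum>\<^bsub>uw edge\<^esub> (z\<^sub>u - z\<^sub>w)\<^sup>2) / 2\<close>,
  which is negative unless \<open>z\<close> is constant on edges, i.e. unless \<open>y = 0\<close>. Both terms are
  therefore nonnegative and at least one is positive.
\<close>

lemma is_walk_Nil [simp]: "\<not> is_walk E []"
  by (simp add: is_walk_def)

lemma is_walk_single [simp]: "is_walk E [x]"
  by (simp add: is_walk_def)

lemma is_walk_Cons_Cons [simp]: "is_walk E (x # y # xs) \<longleftrightarrow> E x y \<and> is_walk E (y # xs)"
  unfolding is_walk_def by (auto simp: nth_Cons split: nat.splits)

lemma is_walk_Cons_iff: "xs \<noteq> [] \<Longrightarrow> is_walk E (x # xs) \<longleftrightarrow> E x (hd xs) \<and> is_walk E xs"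
  by (cases xs) auto

lemma is_walk_append:
  "is_walk E xs \<Longrightarrow> is_walk E ys \<Longrightarrow> E (last xs) (hd ys) \<Longrightarrow> is_walk E (xs @ ys)"
proof (induction xs)
  case (Cons x xs)
  have "ys \<noteq> []" using Cons.prems(2) by auto
  with Cons show ?case by (cases xs) (auto simp: is_walk_Cons_iff)
qed simp

lemma is_walk_append_tl:
  assumes "is_walk E xs" "is_walk E ys" "last xs = hd ys"
  shows "is_walk E (xs @ tl ys)"
  using assms is_walk_append[OF assms(1), of "tl ys"]
  by (cases ys; cases "tl ys") (auto simp: is_walk_Cons_iff)

lemma is_walk_rev:
  "(\<And>u v. E u v \<Longrightarrow> E v u) \<Longrightarrow> is_walk E xs \<Longrightarrow> is_walk E (rev xs)"
proof (induction xs)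
  case (Cons x xs)
  show ?case
  proof (cases xs)
    case (Cons y ys)
    with Cons.prems have "is_walk E (rev xs)" "E y x"
      using Cons.IH by auto
    then show ?thesis
      using is_walk_append[of E "rev xs" "[x]"] Cons by (simp add: last_rev)
  qed simp
qed simp

lemma is_walk_drop: "is_walk E xs \<Longrightarrow> p < length xs \<Longrightarrow> is_walk E (drop p xs)"
proof (induction xs arbitrary: p)
  case (Cons x xs)
  then show ?case
    by (cases p; cases xs) (auto simp: is_walk_Cons_iff)
qed simp

lemma is_walk_distinct_subwalk:
  "is_walk E xs \<Longrightarrow> \<exists>zs. is_walk E zs \<and> distinct zs \<and> hd zs = hd xs \<and> last zs = last xs \<and> set zs \<subseteq> set xs"
proof (induction xs)
  case (Cons x xs)
  show ?case
  proof (cases xs)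
    case Nil
    then show ?thesis by (intro exI[of _ "[x]"]) auto
  next
    case xs: (Cons y ys)
    with Cons.prems have "E x y" "is_walk E xs" by auto
    with Cons.IH obtain zs where zs: "is_walk E zs" "distinct zs" "hd zs = y"
      "last zs = last xs" "set zs \<subseteq> set xs"
      using xs by auto
    show ?thesis
    proof (cases "x \<in> set zs")
      case True
      \<comment> \<open>shortcut the loop back to \<open>x\<close>\<close>
      then obtain as bs where zs_split: "zs = as @ x # bs" by (meson split_list)
      have "is_walk E (x # bs)"
        using is_walk_drop[OF zs(1), of "length as"] zs_split by simp
      then show ?thesis
        using zs zs_split xs by (intro exI[of _ "x # bs"]) (auto simp: last_append)
    next
      case False
      have "zs \<noteq> []" using zs(1) by auto
      with zs \<open>E x y\<close> have "is_walk E (x # zs)" by (simp add: is_walk_Cons_iff)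
      then show ?thesis
        using zs False xs by (intro exI[of _ "x # zs"]) auto
    qed
  qed
qed simp

lemma graph_dist_le:
  assumes "is_walk E xs"
  shows "graph_dist E (hd xs) (last xs) \<le> length xs - 1"
  unfolding graph_dist_def using assms by (intro Least_le) (cases xs, auto)

lemma graph_dist_self [simp]: "graph_dist E u u = 0"
  using graph_dist_le[of E "[u]"] by simp

lemma graph_dist_lt_via:
  assumes "is_walk E xs" "v \<in> set xs" "hd xs \<noteq> v"
  shows "graph_dist E v (last xs) < length xs - 1"
proof -
  obtain p where p: "p < length xs" "xs ! p = v"
    using assms(2) by (meson in_set_conv_nth)
  moreover have "xs \<noteq> []" using assms(1) by auto
  ultimately have "p \<noteq> 0" using assms(3) by (metis hd_conv_nth)
  have "graph_dist E (hd (drop p xs)) (last (drop p xs)) \<le> length (drop p xs) - 1"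
    using is_walk_drop[OF assms(1) p(1)] by (rule graph_dist_le)
  with p \<open>p \<noteq> 0\<close> show ?thesis
    by (simp add: hd_drop_conv_nth last_drop)
qed

locale tree_graph =
  fixes E :: "'a::finite \<Rightarrow> 'a \<Rightarrow> bool"
  assumes sym: "E u v \<Longrightarrow> E v u"
    and irrefl: "\<not> E u u"
    and connected: "\<exists>xs. is_walk E xs \<and> hd xs = u \<and> last xs = v"
    and acyclic: "\<not> is_cycle E xs"
begin

lemma shortest_walk:
  obtains xs where "is_walk E xs" "hd xs = u" "last xs = v" "length xs = Suc (graph_dist E u v)"
proof -
  obtain xs where xs: "is_walk E xs" "hd xs = u" "last xs = v"
    using connected by blast
  then have "\<exists>k xs. is_walk E xs \<and> hd xs = u \<and> last xs = v \<and> length xs = Suc k"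
    by (intro exI[of _ "length xs - 1"] exI[of _ xs]) (cases xs, auto)
  from LeastI_ex[OF this] show ?thesis
    using that unfolding graph_dist_def by blast
qed

lemma graph_dist_eq_0_iff [simp]: "graph_dist E u v = 0 \<longleftrightarrow> u = v"
  by (metis shortest_walk graph_dist_self is_walk_Nil last_ConsL length_0_conv list.sel(1)
      length_Suc_conv)

lemma graph_dist_sym: "graph_dist E u v = graph_dist E v u"
proof -
  have "graph_dist E u v \<le> graph_dist E v u" for u v
  proof -
    obtain xs where xs: "is_walk E xs" "hd xs = v" "last xs = u" "length xs = Suc (graph_dist E v u)"
      by (rule shortest_walk)
    moreover have "xs \<noteq> []" using xs(1) by auto
    ultimately show ?thesis
      using graph_dist_le[OF is_walk_rev[OF sym xs(1)]] by (simp add: hd_rev last_rev)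
  qed
  then show ?thesis by (metis le_antisym)
qed

lemma graph_dist_edge: "E u v \<Longrightarrow> graph_dist E u v = 1"
  using graph_dist_le[of E "[u, v]"] irrefl by (cases "graph_dist E u v") auto

lemma graph_dist_le_neighbour: "E u w \<Longrightarrow> graph_dist E u v \<le> graph_dist E w v + 1"
proof -
  assume "E u w"
  obtain ys where ys: "is_walk E ys" "hd ys = w" "last ys = v" "length ys = Suc (graph_dist E w v)"
    by (rule shortest_walk)
  moreover have "ys \<noteq> []" using ys(1) by auto
  ultimately show ?thesis
    using graph_dist_le[of E "u # ys"] \<open>E u w\<close> by (simp add: is_walk_Cons_iff)
qed

text \<open>Otherwise a repetition-free such walk, closed up through \<open>u\<close>, is a cycle.\<close>
lemma walk_between_neighbours_contains:
  assumes "E u w1" "E u w2" "w1 \<noteq> w2" "is_walk E ys" "hd ys = w1" "last ys = w2"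
  shows "u \<in> set ys"
proof (rule ccontr)
  assume "u \<notin> set ys"
  obtain zs where zs: "is_walk E zs" "distinct zs" "hd zs = w1" "last zs = w2" "set zs \<subseteq> set ys"
    using is_walk_distinct_subwalk[OF assms(4)] assms(5,6) by auto
  then have "zs \<noteq> []" by auto
  with zs assms(3) have "length zs \<ge> 2"
    by (cases zs) (auto simp: Suc_le_eq)
  have "is_cycle E (u # zs)"
    unfolding is_cycle_def
    using zs \<open>zs \<noteq> []\<close> \<open>length zs \<ge> 2\<close> \<open>u \<notin> set ys\<close> assms(1,2) sym
    by (auto simp: is_walk_Cons_iff)
  with acyclic show False by blast
qed

lemma graph_dist_step_towards:
  assumes "u \<noteq> v"
  obtains w ws where "E u w" "graph_dist E w v + 1 = graph_dist E u v"
    "is_walk E ws" "hd ws = w" "last ws = v" "u \<notin> set ws"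
proof -
  obtain xs where xs: "is_walk E xs" "hd xs = u" "last xs = v" "length xs = Suc (graph_dist E u v)"
    by (rule shortest_walk)
  with assms obtain w ws where xs_eq: "xs = u # ws" "ws \<noteq> []" "hd ws = w"
    by (cases xs; cases "tl xs") auto
  with xs have ws: "E u w" "is_walk E ws" "last ws = v" "length ws = graph_dist E u v"
    by (auto simp: is_walk_Cons_iff)
  have "graph_dist E w v + 1 = graph_dist E u v"
    using graph_dist_le[OF ws(2)] graph_dist_le_neighbour[OF ws(1), of v] ws xs_eq assms
    by (cases "graph_dist E u v") auto
  moreover have "u \<notin> set ws"
  proof
    assume "u \<in> set ws"
    moreover have "hd ws \<noteq> u" using ws(1) xs_eq(3) irrefl by blast
    ultimately show False
      using graph_dist_lt_via[OF ws(2)] ws(3,4) by fastforce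
  qed
  ultimately show ?thesis
    using that ws xs_eq by blast
qed

text \<open>A shortest walk from \<open>w'\<close> to \<open>v\<close> avoiding \<open>u\<close>, followed by \<open>ws\<close> backwards, would join two
  neighbours of \<open>u\<close> without passing through \<open>u\<close>.\<close>
lemma graph_dist_step_away:
  assumes "E u w" "is_walk E ws" "hd ws = w" "last ws = v" "u \<notin> set ws"
    and "E u w'" "w' \<noteq> w"
  shows "graph_dist E w' v = graph_dist E u v + 1"
proof -
  obtain ys where ys: "is_walk E ys" "hd ys = w'" "last ys = v" "length ys = Suc (graph_dist E w' v)"
    by (rule shortest_walk)
  have "u \<in> set ys"
  proof (rule ccontr)
    assume "u \<notin> set ys"
    let ?zs = "ys @ tl (rev ws)"
    have "ws \<noteq> []" using assms(2) by auto
    have "is_walk E ?zs"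
      using is_walk_append_tl[OF ys(1) is_walk_rev[OF sym assms(2)]] ys(3) assms(4)
      by (simp add: hd_rev)
    moreover have "hd ?zs = w'" using ys(1,2) by (cases ys) auto
    moreover have "last ?zs = w"
      using ys(3) assms(3,4) \<open>ws \<noteq> []\<close>
      by (cases "rev ws"; cases "tl (rev ws)") (auto simp: hd_rev)
    ultimately have "u \<in> set ?zs"
      by (rule walk_between_neighbours_contains[OF assms(6,1,7)])
    moreover have "set (tl (rev ws)) \<subseteq> set ws" by (cases "rev ws") auto
    ultimately show False
      using \<open>u \<notin> set ys\<close> assms(5) by auto
  qed
  then have "graph_dist E u v < graph_dist E w' v"
    using graph_dist_lt_via[OF ys(1)] ys assms(6) irrefl by fastforce
  with graph_dist_le_neighbour[OF sym[OF assms(6)], of v] show ?thesis by simp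
qed

end

definition vertex_degree :: "('a \<Rightarrow> 'a \<Rightarrow> bool) \<Rightarrow> 'a \<Rightarrow> nat" where
  "vertex_degree E u = card {w. E u w}"

definition graph_laplacian :: "('a \<Rightarrow> 'a \<Rightarrow> bool) \<Rightarrow> ('a \<Rightarrow> real) \<Rightarrow> 'a \<Rightarrow> real" where
  "graph_laplacian E f u = (\<Sum>w | E u w. f u - f w)"

lemma graph_laplacian_sum:
  fixes D :: "'a::finite \<Rightarrow> 'b \<Rightarrow> real"
  assumes "finite B"
  shows "graph_laplacian E (\<lambda>w. \<Sum>v\<in>B. D w v * y v) u = (\<Sum>v\<in>B. graph_laplacian E (\<lambda>w. D w v) u * y v)"
  unfolding graph_laplacian_def
  by (simp add: sum_subtractf sum_distrib_left sum_distrib_right left_diff_distrib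
      sum.swap[of _ B] mult.assoc)

lemma graph_laplacian_quadratic_form:
  fixes f :: "'a::finite \<Rightarrow> real"
  assumes sym: "\<And>u w. E u w \<Longrightarrow> E w u"
  shows "(\<Sum>u\<in>UNIV. graph_laplacian E f u * f u) = (\<Sum>u\<in>UNIV. \<Sum>w | E u w. (f u - f w)\<^sup>2) / 2"
proof -
  have swap: "(\<Sum>u\<in>UNIV. \<Sum>w | E u w. g u w) = (\<Sum>u\<in>UNIV. \<Sum>w | E u w. g w u)" for g :: "'a \<Rightarrow> 'a \<Rightarrow> real"
  proof -
    have "{u. E u w} = {u. E w u}" for w using sym by blast
    then show ?thesis
      using sum.swap_restrict[of UNIV UNIV g "\<lambda>u w. E u w"] by simp
  qed
  have "2 * (\<Sum>u\<in>UNIV. graph_laplacian E f u * f u)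
      = (\<Sum>u\<in>UNIV. \<Sum>w | E u w. (f u - f w) * f u) + (\<Sum>u\<in>UNIV. \<Sum>w | E u w. (f w - f u) * f w)"
    unfolding graph_laplacian_def sum_distrib_right using swap[of "\<lambda>u w. (f u - f w) * f u"] by simp
  also have "\<dots> = (\<Sum>u\<in>UNIV. \<Sum>w | E u w. (f u - f w)\<^sup>2)"
    by (simp add: sum.distrib[symmetric] power2_eq_square algebra_simps)
  finally show ?thesis by simp
qed

context tree_graph
begin

text \<open>In matrix form \<open>L M = \<tau> \<one>\<^sup>T - 2 I\<close> with \<open>\<tau> = 2 - deg\<close> (Graham and Lovasz).\<close>
lemma graph_laplacian_graph_dist:
  "graph_laplacian E (\<lambda>w. real (graph_dist E w v)) u = 2 - real (vertex_degree E u) - (if u = v then 2 else 0)"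
proof (cases "u = v")
  case True
  have "graph_dist E w u = 1" if "E u w" for w
    using graph_dist_edge[OF sym[OF that]] .
  with True show ?thesis
    unfolding graph_laplacian_def vertex_degree_def by simp
next
  case False
  then obtain w ws where w: "E u w" "graph_dist E w v + 1 = graph_dist E u v"
    "is_walk E ws" "hd ws = w" "last ws = v" "u \<notin> set ws"
    by (rule graph_dist_step_towards)
  let ?N = "{w. E u w}"
  have "w \<in> ?N" using w(1) by simp
  then have "graph_laplacian E (\<lambda>w. real (graph_dist E w v)) u
      = (real (graph_dist E u v) - real (graph_dist E w v))
        + (\<Sum>w'\<in>?N - {w}. real (graph_dist E u v) - real (graph_dist E w' v))"
    unfolding graph_laplacian_def by (simp add: sum.remove)
  also have "\<dots> = 1 - real (card ?N - 1)"
    using w graph_dist_step_away[OF w(1,3-6)] by (simp add: of_nat_add[symmetric] del: of_nat_add)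
  also have "\<dots> = 2 - real (vertex_degree E u)"
  proof -
    have "card ?N \<ge> 1" using \<open>w \<in> ?N\<close> by (auto simp: Suc_le_eq card_gt_0_iff)
    then show ?thesis by (simp add: vertex_degree_def of_nat_diff)
  qed
  finally show ?thesis using False by simp
qed

end

lemma graph_laplacian_mult_sum_zero:
  fixes D :: "'a::finite \<Rightarrow> 'a \<Rightarrow> real"
  assumes laplacian_D: "\<And>u v. graph_laplacian E (\<lambda>w. D w v) u = \<tau> u - (if u = v then 2 else 0)"
    and sum_y: "(\<Sum>u\<in>UNIV. y u) = 0"
  shows "graph_laplacian E (\<lambda>u. \<Sum>v\<in>UNIV. D u v * y v) u = - 2 * y u"
proof -
  have "graph_laplacian E (\<lambda>u. \<Sum>v\<in>UNIV. D u v * y v) u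
      = (\<Sum>v\<in>UNIV. (\<tau> u - (if u = v then 2 else 0)) * y v)"
    by (simp add: graph_laplacian_sum laplacian_D)
  also have "\<dots> = (\<Sum>v\<in>UNIV. \<tau> u * y v - (if v = u then 2 * y u else 0))"
    by (intro sum.cong) (auto simp: left_diff_distrib)
  also have "\<dots> = \<tau> u * (\<Sum>v\<in>UNIV. y v) - 2 * y u"
    by (simp add: sum_subtractf sum_distrib_left)
  finally show ?thesis using sum_y by simp
qed

lemma quadratic_form_eq_neg_edge_sum:
  fixes D :: "'a::finite \<Rightarrow> 'a \<Rightarrow> real"
  assumes sym: "\<And>u w. E u w \<Longrightarrow> E w u"
    and laplacian_D: "\<And>u v. graph_laplacian E (\<lambda>w. D w v) u = \<tau> u - (if u = v then 2 else 0)"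
    and sum_y: "(\<Sum>u\<in>UNIV. y u) = 0"
  defines "z \<equiv> \<lambda>u. \<Sum>v\<in>UNIV. D u v * y v"
  shows "(\<Sum>u\<in>UNIV. \<Sum>v\<in>UNIV. y u * D u v * y v) = - (\<Sum>u\<in>UNIV. \<Sum>w | E u w. (z u - z w)\<^sup>2) / 4"
proof -
  have "(\<Sum>u\<in>UNIV. \<Sum>v\<in>UNIV. y u * D u v * y v) = (\<Sum>u\<in>UNIV. y u * z u)"
    unfolding z_def by (simp add: sum_distrib_left mult.assoc)
  also have "\<dots> = - (\<Sum>u\<in>UNIV. graph_laplacian E z u * z u) / 2"
    using graph_laplacian_mult_sum_zero[OF laplacian_D sum_y]
    by (simp add: z_def sum_negf sum_distrib_left[symmetric] mult.assoc)
  finally show ?thesis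
    by (simp add: graph_laplacian_quadratic_form[OF sym])
qed

lemma quadratic_form_neg_on_sum_zero:
  fixes D :: "'a::finite \<Rightarrow> 'a \<Rightarrow> real"
  assumes sym: "\<And>u w. E u w \<Longrightarrow> E w u"
    and laplacian_D: "\<And>u v. graph_laplacian E (\<lambda>w. D w v) u = \<tau> u - (if u = v then 2 else 0)"
    and sum_y: "(\<Sum>u\<in>UNIV. y u) = 0"
  shows "(\<Sum>u\<in>UNIV. \<Sum>v\<in>UNIV. y u * D u v * y v) \<le> 0"
    and "y u \<noteq> 0 \<Longrightarrow> (\<Sum>u\<in>UNIV. \<Sum>v\<in>UNIV. y u * D u v * y v) < 0"
proof -
  define z where "z u = (\<Sum>v\<in>UNIV. D u v * y v)" for u
  have form: "(\<Sum>u\<in>UNIV. \<Sum>v\<in>UNIV. y u * D u v * y v) = - (\<Sum>u\<in>UNIV. \<Sum>w | E u w. (z u - z w)\<^sup>2) / 4"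
    using quadratic_form_eq_neg_edge_sum[OF assms] unfolding z_def[abs_def] .
  have nonneg: "0 \<le> (\<Sum>u\<in>UNIV. \<Sum>w | E u w. (z u - z w)\<^sup>2)"
    by (intro sum_nonneg) auto
  with form show "(\<Sum>u\<in>UNIV. \<Sum>v\<in>UNIV. y u * D u v * y v) \<le> 0" by simp
  assume "y u \<noteq> 0"
  show "(\<Sum>u\<in>UNIV. \<Sum>v\<in>UNIV. y u * D u v * y v) < 0"
  proof (rule ccontr)
    assume "\<not> ?thesis"
    with form nonneg have "(\<Sum>u\<in>UNIV. \<Sum>w | E u w. (z u - z w)\<^sup>2) = 0" by simp
    then have "z w = z u" if "E u w" for u w
      using that by (simp add: sum_nonneg_eq_0_iff sum_nonneg)
    then have "graph_laplacian E z u = 0"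
      by (simp add: graph_laplacian_def)
    with graph_laplacian_mult_sum_zero[OF laplacian_D sum_y] \<open>y u \<noteq> 0\<close> show False
      by (simp add: z_def[abs_def])
  qed
qed

lemma inner_mult_scaled_ones_minus_id:
  fixes M :: "real^'n^'n" and x :: "real^'n"
  shows "x \<bullet> ((M ** (c *\<^sub>R all_ones - mat 1)) *v x)
    = (\<Sum>i\<in>UNIV. \<Sum>j\<in>UNIV. x$i * M$i$j * (c * (\<Sum>k\<in>UNIV. x$k) - x$j))"
proof -
  have "((c *\<^sub>R all_ones - mat 1) *v x) $ j = c * (\<Sum>k\<in>UNIV. x$k) - x$j" for j
    by (simp add: all_ones_def mat_def matrix_vector_mult_def left_diff_distrib sum_subtractf
        sum_distrib_left if_distrib[of "\<lambda>t. t * _"] cong: if_cong)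
  moreover have "x \<bullet> ((M ** B) *v x) = (\<Sum>i\<in>UNIV. \<Sum>j\<in>UNIV. x$i * M$i$j * (B *v x)$j)"
    for B :: "real^'n^'n"
    unfolding matrix_vector_mul_assoc[symmetric]
    by (simp add: inner_vec_def matrix_vector_mult_def sum_distrib_left mult.assoc)
  ultimately show ?thesis by simp
qed

text \<open>The cross terms cancel by symmetry of \<open>D\<close>.\<close>
lemma symmetric_form_centred:
  fixes D :: "'a::finite \<Rightarrow> 'a \<Rightarrow> real"
  assumes D_sym: "\<And>i j. D i j = D j i"
  shows "(\<Sum>i\<in>UNIV. \<Sum>j\<in>UNIV. x i * D i j * (2 * a - x j))
    = a\<^sup>2 * (\<Sum>i\<in>UNIV. \<Sum>j\<in>UNIV. D i j) - (\<Sum>i\<in>UNIV. \<Sum>j\<in>UNIV. (x i - a) * D i j * (x j - a))"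
proof -
  define y where "y i = x i - a" for i
  have cross: "(\<Sum>i\<in>UNIV. \<Sum>j\<in>UNIV. a * (D i j * y j)) = (\<Sum>i\<in>UNIV. \<Sum>j\<in>UNIV. a * (y i * D i j))"
    by (subst sum.swap) (simp add: D_sym mult.commute)
  have "(\<Sum>i\<in>UNIV. \<Sum>j\<in>UNIV. x i * D i j * (2 * a - x j))
      = (\<Sum>i\<in>UNIV. \<Sum>j\<in>UNIV. a\<^sup>2 * D i j - a * (D i j * y j) + a * (y i * D i j) - y i * D i j * y j)"
    by (intro sum.cong refl) (simp add: y_def algebra_simps power2_eq_square)
  also have "\<dots> = a\<^sup>2 * (\<Sum>i\<in>UNIV. \<Sum>j\<in>UNIV. D i j) - (\<Sum>i\<in>UNIV. \<Sum>j\<in>UNIV. y i * D i j * y j)"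
    using cross by (simp add: sum.distrib sum_subtractf sum_distrib_left)
  finally show ?thesis by (simp add: y_def)
qed

lemma (in tree_graph) total_graph_dist_pos:
  assumes "CARD('a) \<ge> 2"
  shows "0 < (\<Sum>i\<in>UNIV. \<Sum>j\<in>UNIV. real (graph_dist E i j))"
proof -
  obtain u v :: 'a where "u \<noteq> v"
    using assms card_le_Suc0_iff_eq[of "UNIV :: 'a set"] by auto
  then have "0 < real (graph_dist E u v)" by (simp add: neq0_conv[symmetric])
  also have "\<dots> \<le> (\<Sum>j\<in>UNIV. real (graph_dist E u j))"
    by (rule member_le_sum) auto
  also have "\<dots> \<le> (\<Sum>i\<in>UNIV. \<Sum>j\<in>UNIV. real (graph_dist E i j))"
    by (rule member_le_sum[of u UNIV "\<lambda>i. \<Sum>j\<in>UNIV. real (graph_dist E i j)"]) (auto intro: sum_nonneg)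
  finally show ?thesis .
qed

theorem mainTheorem12:
  fixes E :: "'n::finite \<Rightarrow> 'n \<Rightarrow> bool"
  assumes "is_tree E" and "CARD('n) \<ge> 3"
  shows "\<forall>x :: real^'n. x \<noteq> 0 \<longrightarrow>
           x \<bullet> ((distance_matrix E ** ((2 / real CARD('n)) *\<^sub>R all_ones - mat 1)) *v x) > 0"
proof (intro allI impI)
  fix x :: "real^'n"
  assume "x \<noteq> 0"
  interpret tree_graph E
    using assms(1) unfolding is_tree_def by unfold_locales blast+
  define D where "D i j = real (graph_dist E i j)" for i j
  define a where "a = (\<Sum>k\<in>UNIV. x$k) / real CARD('n)"
  define y where "y i = x$i - a" for i
  have form: "x \<bullet> ((distance_matrix E ** ((2 / real CARD('n)) *\<^sub>R all_ones - mat 1)) *v x)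
      = a\<^sup>2 * (\<Sum>i\<in>UNIV. \<Sum>j\<in>UNIV. D i j) - (\<Sum>i\<in>UNIV. \<Sum>j\<in>UNIV. y i * D i j * y j)"
    using symmetric_form_centred[of D "\<lambda>i. x$i" a] graph_dist_sym
    by (simp add: inner_mult_scaled_ones_minus_id distance_matrix_def D_def a_def y_def)
  have "(\<Sum>i\<in>UNIV. y i) = 0"
    by (simp add: y_def a_def sum_subtractf)
  note negative = quadratic_form_neg_on_sum_zero[OF sym graph_laplacian_graph_dist[folded D_def] this]
  have total_pos: "0 < (\<Sum>i\<in>UNIV. \<Sum>j\<in>UNIV. D i j)"
    using total_graph_dist_pos assms(2) unfolding D_def by simp
  show "0 < x \<bullet> ((distance_matrix E ** ((2 / real CARD('n)) *\<^sub>R all_ones - mat 1)) *v x)"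
  proof (cases "a = 0")
    case True
    obtain i where "x$i \<noteq> 0"
      using \<open>x \<noteq> 0\<close> by (metis vec_eq_iff zero_index)
    with True have "y i \<noteq> 0" by (simp add: y_def)
    with negative(2) True show ?thesis by (simp add: form)
  next
    case False
    with total_pos have "0 < a\<^sup>2 * (\<Sum>i\<in>UNIV. \<Sum>j\<in>UNIV. D i j)" by simp
    with negative(1) show ?thesis by (simp add: form)
  qed
qed

end
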